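(* Let $(\psi_\mu)_{\mu\in M}$ be an EF-like sub-$B$ family in which $B'$ is a convex function. Fix $d>0$. For $\mu_0\in M$, let $\mu_1=\mu_1(\mu_0)$ be the solution of $$D_{\psi^*_{\mu_0}}(\mu_1,\mu_0)\,\mathbf{1}(\mu_1\ge\mu_0)=d.$$ Then for any data (any $n$ and any realized $\bar X_n$), the map $\mu_0\mapsto\mathrm{L}_n(\mu_1(\mu_0),\mu_0)$ is nonincreasing on $(-\infty,\bar X_n]\cap M$. Consequently, for each $n$, the confidence set $\mathrm{CI}_n$ defined in the context is an open interval.
   Context: Sub-$\psi_M$ family. Let $M\subset\mathbb{R}$ be a nonempty open convex set. For each $\mu\in M$, $\psi_\mu$ is an extended real-valued convex function with the following properties: - it is finite and strictly convex on a common closed set $\Lambda$; - it is differentiable on its nonempty interior, which contains $0$; - $\psi_\mu(0)=0$ and $\psi_\mu'(0)=\mu$; - its convex conjugate $\psi_\mu^*$ is finite and differentiable on $M$. A distribution $P$ on $\mathbb{R}$ is sub-$\psi_\mu$ if its support lies in $\overline M$, its mean is $\mu$, and $\log\mathbb{E}_Pe^{\lambda X}\le\psi_\mu(\lambda)$ for all $\lambda\in\Lambda$. EF-like sub-$B$ family. The family is EF-like sub-$B$ if there is an extended real-valued convex function $B$, finite, strictly convex and differentiable on $\Lambda=(B')^{-1}(M)$, such that $\psi_\mu(\lambda)=B(\lambda+\theta_\mu)-B(\theta_\mu)$ with $\theta_\mu=(B')^{-1}(\mu)$. Bregman divergence. $D_{\psi^*_{\mu_0}}(z_1,z_2)=\psi^*_{\mu_0}(z_1)-\psi^*_{\mu_0}(z_2)-(\psi^*_{\mu_0})'(z_2)(z_1-z_2)$.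 Statistics. $\bar X_n=\frac1n\sum_{i\le n}X_i$ for the observed data $X_1,X_2,\dots$, and $\mathrm{L}_n(z,\mu_0)=\exp\{n[\lambda\bar X_n-\psi_{\mu_0}(\lambda)]\}$ with $\lambda=(\psi^*_{\mu_0})'(z)$. Confidence sets. Fix $g_\alpha>0$ and integers $1\le n_{\min}<n_{\max}$. For $\mu_0\in M$, let $\mu_1(\mu_0)<\mu_2(\mu_0)$ in $(\mu_0,\infty)\cap M$ solve $$g_\alpha/n_{\max}=D_{\psi^*_{\mu_0}}(\mu_1,\mu_0),\qquad g_\alpha/n_{\min}=D_{\psi^*_{\mu_0}}(\mu_2,\mu_0),$$ and let $L_i=\frac{\partial}{\partial z}D_{\psi^*_{\mu_0}}(z,\mu_0)\big|_{z=\mu_i}$ for $i=1,2$. Define - for $n<n_{\min}$: $\mathrm{CI}_n=\{\mu_0\in M: L_2(\bar X_n-\mu_2)<g_\alpha/n-g_\alpha/n_{\min}\}$; - for $n_{\min}\le n\le n_{\max}$: $\mathrm{CI}_n=\{\mu_0\in M: D_{\psi^*_{\mu_0}}(\bar X_n,\mu_0)<g_\alpha/n \text{ or } \bar X_n<\mu_0\}$; - for $n>n_{\max}$: $\mathrm{CI}_n=\{\mu_0\in M: L_1(\bar X_n-\mu_1)<g_\alpha/n-g_\alpha/n_{\max}\}$. *)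

theory Defs
  imports "HOL-Analysis.Analysis"
begin

definition strictly_convex_on :: "real set \<Rightarrow> (real \<Rightarrow> real) \<Rightarrow> bool" where
  "strictly_convex_on S f \<longleftrightarrow> convex S \<and>
     (\<forall>x\<in>S. \<forall>y\<in>S. \<forall>t. x \<noteq> y \<longrightarrow> 0 < t \<longrightarrow> t < 1 \<longrightarrow>
        f ((1 - t) * x + t * y) < (1 - t) * f x + t * f y)"

text \<open>Convex conjugate of an extended real-valued function that is finite (equal to f)
  on the set D and equal to +infinity outside D: sup over lambda of lambda z - f lambda.\<close>
definition conv_conj :: "(real \<Rightarrow> real) \<Rightarrow> real set \<Rightarrow> real \<Rightarrow> ereal" where
  "conv_conj f D z = (SUP l\<in>D. ereal (l * z - f l))"

text \<open>EF-like sub-B family.  B is finite exactly on Lam = (B')^{-1}(M).\<close>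
definition theta :: "(real \<Rightarrow> real) \<Rightarrow> real set \<Rightarrow> real \<Rightarrow> real" where
  "theta B Lam mu = inv_into Lam (deriv B) mu"

definition psi :: "(real \<Rightarrow> real) \<Rightarrow> real set \<Rightarrow> real \<Rightarrow> real \<Rightarrow> real" where
  "psi B Lam mu l = B (l + theta B Lam mu) - B (theta B Lam mu)"

definition psi_dom :: "(real \<Rightarrow> real) \<Rightarrow> real set \<Rightarrow> real \<Rightarrow> real set" where
  "psi_dom B Lam mu = {l. l + theta B Lam mu \<in> Lam}"

definition psi_star :: "(real \<Rightarrow> real) \<Rightarrow> real set \<Rightarrow> real \<Rightarrow> real \<Rightarrow> ereal" where
  "psi_star B Lam mu z = conv_conj (psi B Lam mu) (psi_dom B Lam mu) z"

definition psi_star' :: "(real \<Rightarrow> real) \<Rightarrow> real set \<Rightarrow> real \<Rightarrow> real \<Rightarrow> real" where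
  "psi_star' B Lam mu z = deriv (\<lambda>w. real_of_ereal (psi_star B Lam mu w)) z"

definition breg :: "(real \<Rightarrow> real) \<Rightarrow> real set \<Rightarrow> real \<Rightarrow> real \<Rightarrow> real \<Rightarrow> ereal" where
  "breg B Lam mu0 z1 z2 =
     psi_star B Lam mu0 z1 - psi_star B Lam mu0 z2 - ereal (psi_star' B Lam mu0 z2 * (z1 - z2))"

definition Ln :: "(real \<Rightarrow> real) \<Rightarrow> real set \<Rightarrow> nat \<Rightarrow> real \<Rightarrow> real \<Rightarrow> real \<Rightarrow> real" where
  "Ln B Lam n xbar z mu0 =
     (let l = psi_star' B Lam mu0 z in exp (real n * (l * xbar - psi B Lam mu0 l)))"

definition slopeD :: "(real \<Rightarrow> real) \<Rightarrow> real set \<Rightarrow> real \<Rightarrow> real \<Rightarrow> real" where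
  "slopeD B Lam mu0 z = deriv (\<lambda>w. real_of_ereal (breg B Lam mu0 w mu0)) z"

text \<open>Confidence set CI_n; mu1, mu2 are the solution maps mu0 \<mapsto> mu_i(mu0).\<close>
definition CI :: "(real \<Rightarrow> real) \<Rightarrow> real set \<Rightarrow> real set \<Rightarrow> real \<Rightarrow> nat \<Rightarrow> nat
     \<Rightarrow> (real \<Rightarrow> real) \<Rightarrow> (real \<Rightarrow> real) \<Rightarrow> nat \<Rightarrow> real \<Rightarrow> real set" where
  "CI B Lam M g nmin nmax mu1 mu2 n xbar =
     (if n < nmin then
        {mu0\<in>M. slopeD B Lam mu0 (mu2 mu0) * (xbar - mu2 mu0) < g / real n - g / real nmin}
      else if n \<le> nmax then
        {mu0\<in>M. breg B Lam mu0 xbar mu0 < ereal (g / real n) \<or> xbar < mu0}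
      else
        {mu0\<in>M. slopeD B Lam mu0 (mu1 mu0) * (xbar - mu1 mu0) < g / real n - g / real nmax})"

end

theory Submission
  imports Defs
begin

(* In the natural parameter \<theta> = (B')\<^sup>-\<^sup>1 everything is expressed through B alone:
   for \<mu>, z \<in> M the conjugate \<psi>*\<^sub>\<mu>(z) is the Bregman divergence D\<^sub>B(\<theta> \<mu>, \<theta> z), and
   log L\<^sub>n(z, \<mu>\<^sub>0) = n * ((b - a) x - (B b - B a)) with a = \<theta> \<mu>\<^sub>0, b = \<theta> z, x the sample mean.
   So \<mu>\<^sub>1(\<mu>\<^sub>0) is the point b above a on the level set D\<^sub>B(a, b) = d.  Convexity of B' gives
   D\<^sub>B(a + h, b + h) \<ge> D\<^sub>B(a, b), hence along the level set b increases with a while b - a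
   decreases.  With the tangent inequalities of B this makes the log-likelihood ratio
   nonincreasing in a while B'(a) \<le> x, and nonpositive once B'(a) \<ge> x.  Each CI\<^sub>n is therefore
   an open subset of the open interval M that is closed upwards in M, i.e. an open interval. *)

lemma open_interval_eq_ereal_bounds:
  fixes S :: "real set"
  assumes "open S" and "is_interval S"
  shows "S = {x. (INF s\<in>S. ereal s) < ereal x \<and> ereal x < (SUP s\<in>S. ereal s)}"
proof (intro set_eqI iffI)
  fix x assume "x \<in> S"
  then obtain e where "e > 0" "ball x e \<subseteq> S"
    using assms(1) openE by blast
  then have "x - e/2 \<in> S" "x + e/2 \<in> S"
    by (auto simp: dist_real_def)
  then have "(INF s\<in>S. ereal s) \<le> ereal (x - e/2)" "ereal (x + e/2) \<le> (SUP s\<in>S. ereal s)"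
    by (auto intro: INF_lower SUP_upper)
  with \<open>e > 0\<close> show "x \<in> {x. (INF s\<in>S. ereal s) < ereal x \<and> ereal x < (SUP s\<in>S. ereal s)}"
    by (auto elim: le_less_trans less_le_trans[rotated])
next
  fix x assume "x \<in> {x. (INF s\<in>S. ereal s) < ereal x \<and> ereal x < (SUP s\<in>S. ereal s)}"
  then obtain u v where "u \<in> S" "v \<in> S" "u < x" "x < v"
    by (auto simp: INF_less_iff less_SUP_iff)
  then show "x \<in> S"
    using assms(2) by (meson less_imp_le mem_is_interval_1_I)
qed

lemma upward_closed_open_subset_interval:
  fixes U M :: "real set"
  assumes "open U" and "U \<subseteq> M" and "is_interval M"
    and up: "\<And>u v. u \<in> U \<Longrightarrow> v \<in> M \<Longrightarrow> u \<le> v \<Longrightarrow> v \<in> U"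
  shows "\<exists>a b :: ereal. U = {x. a < ereal x \<and> ereal x < b}"
proof -
  have "is_interval U"
    unfolding is_interval_1 using assms(2,3) up by (meson mem_is_interval_1_I subsetD)
  then show ?thesis
    using open_interval_eq_ereal_bounds[OF assms(1)] by blast
qed

lemma open_sublevel_set:
  fixes f :: "'a::topological_space \<Rightarrow> real"
  assumes "open S" and "continuous_on S f"
  shows "open {x \<in> S. f x < c}"
proof -
  have "{x \<in> S. f x < c} = f -` {..<c} \<inter> S"
    by auto
  then show ?thesis
    using continuous_on_open_vimage[OF assms(1)] assms(2) by (metis open_lessThan)
qed

lemma convex_on_increments_mono:
  fixes f :: "real \<Rightarrow> real"
  assumes f: "convex_on I f" and "u \<in> I" "b + h \<in> I" "u \<le> b" "0 \<le> h"
  shows "f (u + h) - f u \<le> f (b + h) - f b"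
proof (cases "u = b \<or> h = 0")
  case False
  then have "u < b" "0 < h" using assms by auto
  define l where "l = h / (b + h - u)"
  have l: "0 \<le> l" "l \<le> 1" "l * (b + h - u) = h"
    using \<open>u < b\<close> \<open>0 < h\<close> by (auto simp: l_def field_simps)
  have split_uh: "u + h = (1 - l) * u + l * (b + h)"
    and split_b: "b = (1 - (1 - l)) * u + (1 - l) * (b + h)"
    using l(3) by (simp_all add: algebra_simps)
  have "f (u + h) \<le> (1 - l) * f u + l * f (b + h)"
    using convex_onD[OF f, of l u "b + h"] l assms by (subst split_uh) simp
  moreover have "f b \<le> (1 - (1 - l)) * f u + (1 - l) * f (b + h)"
    using convex_onD[OF f, of "1 - l" u "b + h"] l assms by (subst split_b) simp
  ultimately show ?thesis
    by (simp add: algebra_simps)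
qed auto

locale strictly_convex_potential =
  fixes Lam :: "real set" and B phi :: "real \<Rightarrow> real"
  assumes open_Lam: "open Lam"
    and strictly_convex_B: "strictly_convex_on Lam B"
    and has_derivative_B: "\<And>t. t \<in> Lam \<Longrightarrow> (B has_real_derivative phi t) (at t)"
    and convex_phi: "convex_on Lam phi"
begin

lemma convex_Lam: "convex Lam"
  using strictly_convex_B by (simp add: strictly_convex_on_def)

lemma is_interval_Lam: "is_interval Lam"
  using convex_Lam by (simp add: is_interval_convex_1)

lemma convex_on_B: "convex_on Lam B"
proof (rule convex_on_linorderI[OF _ convex_Lam])
  fix t x y :: real assume "0 < t" "t < 1" "x \<in> Lam" "y \<in> Lam" "x < y"
  then show "B ((1 - t) *\<^sub>R x + t *\<^sub>R y) \<le> (1 - t) * B x + t * B y"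
    using strictly_convex_B by (simp add: strictly_convex_on_def less_imp_le)
qed

lemma continuous_on_B: "continuous_on Lam B"
  using has_derivative_B by (meson DERIV_isCont continuous_at_imp_continuous_on)

lemma continuous_on_phi: "continuous_on Lam phi"
  using convex_on_continuous[OF open_Lam convex_phi] .

lemma above_tangent:
  assumes "s \<in> Lam" "t \<in> Lam"
  shows "B s + phi s * (t - s) \<le> B t"
  using convex_on_imp_above_tangent[OF convex_on_B, where c = s and x = t and f' = "phi s"]
    assms open_Lam convex_Lam
  by (simp add: interior_open convex_connected has_field_derivative_at_within has_derivative_B)

lemma above_tangent_strict:
  assumes "s \<in> Lam" "t \<in> Lam" "s \<noteq> t"
  shows "B s + phi s * (t - s) < B t"
proof -
  define m where "m = (1 - 1/2) * s + 1/2 * t"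
  have "m \<in> Lam"
    using convexD[OF convex_Lam, of s t "1 - 1/2" "1/2"] assms by (simp add: m_def)
  then have "B s + phi s * (m - s) \<le> B m"
    using above_tangent assms by blast
  moreover have "B m < (1 - 1/2) * B s + 1/2 * B t"
    using strictly_convex_B assms unfolding strictly_convex_on_def m_def
    by (metis field_sum_of_halves half_gt_zero less_add_same_cancel1 zero_less_one)
  ultimately show ?thesis
    by (simp add: m_def algebra_simps)
qed

lemma phi_less_iff:
  assumes "s \<in> Lam" "t \<in> Lam"
  shows "phi s < phi t \<longleftrightarrow> s < t"
proof -
  have "phi s < phi t" if "s < t" "s \<in> Lam" "t \<in> Lam" for s t
  proof -
    have "0 < (phi t - phi s) * (t - s)"
      using above_tangent_strict[of s t] above_tangent_strict[of t s] that
      by (simp add: algebra_simps)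
    with \<open>s < t\<close> show ?thesis
      by (simp add: zero_less_mult_iff)
  qed
  with assms show ?thesis
    by (metis linorder_neqE_linordered_idom order_less_asym)
qed

lemma phi_le_iff: "s \<in> Lam \<Longrightarrow> t \<in> Lam \<Longrightarrow> phi s \<le> phi t \<longleftrightarrow> s \<le> t"
  using phi_less_iff by (meson linorder_not_less)

lemma inj_on_phi: "inj_on phi Lam"
  by (rule inj_onI) (metis phi_le_iff order_antisym order_refl)

definition bregman :: "real \<Rightarrow> real \<Rightarrow> real" where
  "bregman a b = B a - B b - phi b * (a - b)"

definition llr :: "real \<Rightarrow> real \<Rightarrow> real \<Rightarrow> real" where
  "llr x a b = (b - a) * x - (B b - B a)"

lemma bregman_self [simp]: "bregman a a = 0"
  by (simp add: bregman_def)

lemma bregman_strict_mono_right: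
  assumes "a \<in> Lam" "b' \<in> Lam" "a \<le> b" "b < b'"
  shows "bregman a b < bregman a b'"
proof -
  have b: "b \<in> Lam"
    using assms is_interval_Lam by (meson less_imp_le mem_is_interval_1_I)
  have "bregman a b' - bregman a b = (B b - B b' - phi b' * (b - b')) + (phi b' - phi b) * (b - a)"
    by (simp add: bregman_def algebra_simps)
  moreover have "0 < B b - B b' - phi b' * (b - b')"
    using above_tangent_strict[of b' b] assms b by simp
  moreover have "0 \<le> (phi b' - phi b) * (b - a)"
    using phi_le_iff[of b b'] assms b by simp
  ultimately show ?thesis
    by linarith
qed

lemma bregman_antimono_left:
  assumes "a \<in> Lam" "b \<in> Lam" "a \<le> a'" "a' \<le> b"
  shows "bregman a' b \<le> bregman a b"
proof -
  have a': "a' \<in> Lam"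
    using assms is_interval_Lam by (meson mem_is_interval_1_I)
  have "B a' + phi a' * (a - a') \<le> B a"
    using above_tangent a' assms by blast
  moreover have "phi a' * (a' - a) \<le> phi b * (a' - a)"
    using phi_le_iff[of a' b] a' assms by (simp add: mult_right_mono)
  ultimately show ?thesis
    by (simp add: bregman_def algebra_simps)
qed

lemma bregman_shift_mono:
  assumes "a \<in> Lam" "b + h \<in> Lam" "a \<le> b" "0 \<le> h"
  shows "bregman a b \<le> bregman (a + h) (b + h)"
proof -
  have mem: "u \<in> Lam" if "a \<le> u" "u \<le> b + h" for u
    using assms that is_interval_Lam by (meson mem_is_interval_1_I)
  define c where "c = phi (b + h) - phi b"
  define k where "k u = B (u + h) - B u - c * u" for u
  \<comment> \<open>the only use of the convexity of \<open>phi\<close>: its increments \<open>phi (u + h) - phi u\<close> grow with \<open>u\<close>\<close>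
  have "k b \<le> k a"
  proof (rule DERIV_nonpos_imp_decreasing_open[OF \<open>a \<le> b\<close>])
    fix u assume u: "a < u" "u < b"
    then have "u \<in> Lam" "u + h \<in> Lam"
      using mem assms by auto
    have "((\<lambda>z. B (z + h)) has_real_derivative phi (u + h)) (at u)"
      using DERIV_shift[of B "phi (u + h)" u h] has_derivative_B[of "u + h"] \<open>u + h \<in> Lam\<close> by simp
    then have "(k has_real_derivative phi (u + h) - phi u - c) (at u)"
      unfolding k_def using has_derivative_B[OF \<open>u \<in> Lam\<close>]
      by (auto intro!: derivative_eq_intros)
    moreover have "phi (u + h) - phi u \<le> c"
      unfolding c_def using convex_on_increments_mono[OF convex_phi, of u b h] u assms mem by simp
    ultimately show "\<exists>y. (k has_real_derivative y) (at u) \<and> y \<le> 0"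
      by auto
  next
    have "continuous_on {a..b} (\<lambda>u. B (u + h))"
      by (rule continuous_on_compose2[OF continuous_on_B]) (use assms mem in \<open>auto intro!: continuous_intros\<close>)
    moreover have "continuous_on {a..b} B"
      by (rule continuous_on_subset[OF continuous_on_B]) (use assms mem in auto)
    ultimately show "continuous_on {a..b} k"
      unfolding k_def by (intro continuous_intros)
  qed
  then show ?thesis
    by (simp add: k_def c_def bregman_def algebra_simps)
qed

lemma bregman_level_set_mono:
  assumes mem: "a \<in> Lam" "b \<in> Lam" "b' \<in> Lam"
    and le: "a \<le> a'" "a \<le> b" "a' \<le> b'"
    and level: "bregman a b = d" "bregman a' b' = d"
  shows "b \<le> b'" and "b' - a' \<le> b - a"
proof -
  show "b \<le> b'"
  proof (rule ccontr)
    assume "\<not> b \<le> b'"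
    then have "bregman a' b' \<le> bregman a b'" "bregman a b' < bregman a b"
      using bregman_antimono_left[of a b' a'] bregman_strict_mono_right[of a b b'] mem le by auto
    with level show False
      by simp
  qed
  show "b' - a' \<le> b - a"
  proof (rule ccontr)
    assume "\<not> b' - a' \<le> b - a"
    have "a' \<in> Lam" "b + (a' - a) \<in> Lam"
      using \<open>\<not> b' - a' \<le> b - a\<close> mem le
      by (auto intro: mem_is_interval_1_I[OF is_interval_Lam, of a b'])
    then have "bregman a b \<le> bregman a' (b + (a' - a))"
      using bregman_shift_mono[of a b "a' - a"] mem le by simp
    also have "\<dots> < bregman a' b'"
      using bregman_strict_mono_right[of a' b' "b + (a' - a)"] \<open>\<not> b' - a' \<le> b - a\<close> mem le
        \<open>a' \<in> Lam\<close> by simp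
    finally show False
      using level by simp
  qed
qed

lemma bregman_level_set_dist:
  assumes mem: "a \<in> Lam" "a' \<in> Lam" "b \<in> Lam" "b' \<in> Lam"
    and le: "a \<le> b" "a' \<le> b'"
    and level: "bregman a b = d" "bregman a' b' = d"
  shows "\<bar>b' - b\<bar> \<le> \<bar>a' - a\<bar>"
proof (cases "a \<le> a'")
  case True
  then show ?thesis
    using bregman_level_set_mono[of a b b' a' d] mem le level by simp
next
  case False
  then show ?thesis
    using bregman_level_set_mono[of a' b' b a d] mem le level by simp
qed

lemma llr_nonpos:
  assumes "a \<in> Lam" "b \<in> Lam" "a \<le> b" "x \<le> phi a"
  shows "llr x a b \<le> 0"
proof -
  have "x * (b - a) \<le> phi a * (b - a)"
    using assms by (simp add: mult_right_mono)
  then show ?thesis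
    using above_tangent[of a b] assms by (simp add: llr_def algebra_simps)
qed

lemma llr_nonneg:
  assumes "a \<in> Lam" "b \<in> Lam" "a \<le> b" "phi b \<le> x"
  shows "0 \<le> llr x a b"
proof -
  have "phi b * (b - a) \<le> x * (b - a)"
    using assms by (simp add: mult_right_mono)
  then show ?thesis
    using above_tangent[of b a] assms by (simp add: llr_def algebra_simps)
qed

lemma llr_level_set_antimono:
  assumes mem: "a \<in> Lam" "a' \<in> Lam" "b \<in> Lam" "b' \<in> Lam"
    and le: "a \<le> a'" "a \<le> b" "a' \<le> b'"
    and level: "bregman a b = d" "bregman a' b' = d"
    and x: "phi a' \<le> x"
  shows "llr x a' b' \<le> llr x a b"
proof -
  have "b \<le> b'" and width: "b' - a' \<le> b - a"
    using bregman_level_set_mono[OF _ _ _ le level] mem by auto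
  define y where "y = phi a'"
  have "llr y a' b' \<le> llr y a b"
  proof (cases "a' \<le> b")
    case True
    have "B a' + phi a' * (a - a') \<le> B a" "B b + phi b * (b' - b) \<le> B b'"
      using above_tangent mem by auto
    moreover have "phi a' * (b' - b) \<le> phi b * (b' - b)"
      using phi_le_iff[of a' b] mem True \<open>b \<le> b'\<close> by (simp add: mult_right_mono)
    ultimately show ?thesis
      by (simp add: llr_def y_def algebra_simps)
  next
    case False
    then show ?thesis
      using llr_nonpos[of a' b' y] llr_nonneg[of a b y] phi_le_iff[of b a'] mem le
      by (simp add: y_def)
  qed
  moreover have "(b' - a') * (x - y) \<le> (b - a) * (x - y)"
    using width x by (simp add: y_def mult_right_mono)
  moreover have "llr x a b = llr y a b + (b - a) * (x - y)" "llr x a' b' = llr y a' b' + (b' - a') * (x - y)"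
    by (simp_all add: llr_def algebra_simps)
  ultimately show ?thesis
    by linarith
qed

end

locale ef_like_family = strictly_convex_potential Lam B "deriv B" for Lam B +
  fixes M :: "real set"
  assumes M_eq: "M = deriv B ` Lam"
    and open_M: "open M"
    and differentiable_psi_star:
      "\<And>mu z. mu \<in> M \<Longrightarrow> z \<in> M \<Longrightarrow> (\<lambda>w. real_of_ereal (psi_star B Lam mu w)) differentiable (at z)"
begin

abbreviation \<theta> :: "real \<Rightarrow> real" where
  "\<theta> \<equiv> theta B Lam"

lemma theta_mem: "mu \<in> M \<Longrightarrow> \<theta> mu \<in> Lam"
  unfolding theta_def M_eq by (auto intro: inv_into_into)

lemma deriv_theta: "mu \<in> M \<Longrightarrow> deriv B (\<theta> mu) = mu"
  unfolding theta_def M_eq by (auto intro: f_inv_into_f)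

lemma theta_deriv: "t \<in> Lam \<Longrightarrow> \<theta> (deriv B t) = t"
  unfolding theta_def using inj_on_phi by (simp add: inv_into_f_f)

lemma theta_le_iff: "mu \<in> M \<Longrightarrow> mu' \<in> M \<Longrightarrow> \<theta> mu \<le> \<theta> mu' \<longleftrightarrow> mu \<le> mu'"
  using phi_le_iff[of "\<theta> mu" "\<theta> mu'"] theta_mem deriv_theta by auto

lemma theta_less_iff: "mu \<in> M \<Longrightarrow> mu' \<in> M \<Longrightarrow> \<theta> mu < \<theta> mu' \<longleftrightarrow> mu < mu'"
  using phi_less_iff[of "\<theta> mu" "\<theta> mu'"] theta_mem deriv_theta by auto

lemma is_interval_M: "is_interval M"
  unfolding M_eq is_interval_connected_1
  using connected_continuous_image[OF continuous_on_phi] convex_Lam convex_connected by blast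

lemma continuous_on_theta: "continuous_on M \<theta>"
proof -
  have "isCont \<theta> (deriv B t)" if "t \<in> Lam" for t
  proof -
    obtain r where "r > 0" "cball t r \<subseteq> Lam"
      using open_Lam \<open>t \<in> Lam\<close> open_contains_cball by blast
    then have near: "s \<in> Lam" if "\<bar>s - t\<bar> \<le> r" for s
      using that by (auto simp: dist_real_def abs_minus_commute)
    show ?thesis
    proof (rule isCont_inverse_function[OF \<open>r > 0\<close>, where f = "deriv B" and x = t])
      show "\<theta> (deriv B s) = s" if "\<bar>s - t\<bar> \<le> r" for s
        using near[OF that] theta_deriv by blast
      show "isCont (deriv B) s" if "\<bar>s - t\<bar> \<le> r" for s
        using near[OF that] continuous_on_phi open_Lam continuous_on_eq_continuous_at by blast
    qed
  qed
  then show ?thesis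
    unfolding M_eq by (auto intro: continuous_at_imp_continuous_on)
qed

lemma psi_star_eq_SUP:
  assumes "mu \<in> M"
  shows "psi_star B Lam mu x = (SUP t\<in>Lam. ereal (t * x - B t)) + ereal (B (\<theta> mu) - \<theta> mu * x)"
proof -
  have dom: "psi_dom B Lam mu = (\<lambda>t. t - \<theta> mu) ` Lam"
    unfolding psi_dom_def by (auto simp: image_iff) (metis add_diff_cancel)
  have "psi_star B Lam mu x = (SUP t\<in>Lam. ereal ((t - \<theta> mu) * x - psi B Lam mu (t - \<theta> mu)))"
    unfolding psi_star_def conv_conj_def dom by (simp add: image_comp o_def)
  also have "\<dots> = (SUP t\<in>Lam. ereal (t * x - B t) + ereal (B (\<theta> mu) - \<theta> mu * x))"
    unfolding psi_def by (intro SUP_cong) (auto simp: algebra_simps)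
  also have "\<dots> = (SUP t\<in>Lam. ereal (t * x - B t)) + ereal (B (\<theta> mu) - \<theta> mu * x)"
    using theta_mem[OF assms] by (intro SUP_ereal_add_left) auto
  finally show ?thesis .
qed

lemma psi_star_eq_bregman:
  assumes "mu \<in> M" "z \<in> M"
  shows "psi_star B Lam mu z = ereal (bregman (\<theta> mu) (\<theta> z))"
proof -
  \<comment> \<open>the supremum is attained where the slope \<open>deriv B t\<close> equals \<open>z\<close>\<close>
  have "(SUP t\<in>Lam. ereal (t * z - B t)) = ereal (\<theta> z * z - B (\<theta> z))"
  proof (rule SUP_eqI)
    fix t assume "t \<in> Lam"
    then show "ereal (t * z - B t) \<le> ereal (\<theta> z * z - B (\<theta> z))"
      using above_tangent[of "\<theta> z" t] theta_mem deriv_theta assms by (simp add: algebra_simps)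
  qed (use theta_mem assms in auto)
  then show ?thesis
    using deriv_theta assms by (simp add: psi_star_eq_SUP bregman_def algebra_simps)
qed

lemma psi_star'_eq:
  assumes "mu \<in> M" "z \<in> M"
  shows "psi_star' B Lam mu z = \<theta> z - \<theta> mu"
proof -
  define h where "h w = real_of_ereal (psi_star B Lam mu w) - (\<theta> z - \<theta> mu) * w" for w
  have "(h has_real_derivative psi_star' B Lam mu z - (\<theta> z - \<theta> mu)) (at z)"
    using differentiable_psi_star[OF assms] unfolding h_def psi_star'_def
    by (auto intro!: derivative_eq_intros simp: DERIV_deriv_iff_real_differentiable)
  moreover obtain r where "r > 0" "ball z r \<subseteq> M"
    using open_M assms openE by blast
  \<comment> \<open>Fermat: \<open>h\<close> has a local minimum at \<open>z\<close>, by the tangent inequality of \<open>B\<close> at \<open>\<theta> y\<close>\<close>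
  moreover have "h z \<le> h y" if "\<bar>z - y\<bar> < r" for y
  proof -
    have "y \<in> M"
      using that \<open>ball z r \<subseteq> M\<close> by (auto simp: dist_real_def)
    then show ?thesis
      using above_tangent[of "\<theta> y" "\<theta> z"] psi_star_eq_bregman assms theta_mem deriv_theta
      by (simp add: h_def bregman_def algebra_simps)
  qed
  ultimately show ?thesis
    using DERIV_local_min by fastforce
qed

lemma breg_eq_psi_star: "mu0 \<in> M \<Longrightarrow> breg B Lam mu0 w mu0 = psi_star B Lam mu0 w"
  using psi_star'_eq[of mu0 mu0] psi_star_eq_bregman[of mu0 mu0]
  by (simp add: breg_def zero_ereal_def[symmetric])

lemma breg_eq_bregman: "mu0 \<in> M \<Longrightarrow> z \<in> M \<Longrightarrow> breg B Lam mu0 z mu0 = ereal (bregman (\<theta> mu0) (\<theta> z))"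
  by (simp add: breg_eq_psi_star psi_star_eq_bregman)

lemma slopeD_eq: "mu0 \<in> M \<Longrightarrow> z \<in> M \<Longrightarrow> slopeD B Lam mu0 z = \<theta> z - \<theta> mu0"
  using psi_star'_eq by (simp add: slopeD_def breg_eq_psi_star psi_star'_def)

lemma Ln_eq_exp_llr: "mu0 \<in> M \<Longrightarrow> z \<in> M \<Longrightarrow> Ln B Lam n x z mu0 = exp (real n * llr x (\<theta> mu0) (\<theta> z))"
  by (simp add: Ln_def psi_def llr_def psi_star'_eq algebra_simps)

lemma slopeD_mul_eq:
  assumes "mu \<in> M" "z \<in> M"
  shows "slopeD B Lam mu z * (x - z) = llr x (\<theta> mu) (\<theta> z) - bregman (\<theta> mu) (\<theta> z)"
  using assms by (simp add: slopeD_eq llr_def bregman_def deriv_theta algebra_simps)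

lemma psi_star_antimono:
  assumes "mu \<in> M" "mu' \<in> M" "mu \<le> mu'" "mu' \<le> x"
  shows "psi_star B Lam mu' x \<le> psi_star B Lam mu x"
proof -
  have "B (\<theta> mu') + mu' * (\<theta> mu - \<theta> mu') \<le> B (\<theta> mu)"
    using above_tangent[of "\<theta> mu'" "\<theta> mu"] theta_mem deriv_theta assms by simp
  moreover have "x * (\<theta> mu - \<theta> mu') \<le> mu' * (\<theta> mu - \<theta> mu')"
    using theta_le_iff[of mu mu'] assms by (simp add: mult_right_mono_neg)
  ultimately have "B (\<theta> mu') - \<theta> mu' * x \<le> B (\<theta> mu) - \<theta> mu * x"
    by (simp add: algebra_simps)
  then show ?thesis
    using assms by (simp add: psi_star_eq_SUP add_left_mono)
qed

lemma open_psi_star_sublevel: "open {mu \<in> M. psi_star B Lam mu x < ereal c}"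
proof (cases "M = {}")
  case False
  define S where "S = (SUP t\<in>Lam. ereal (t * x - B t))"
  have S: "psi_star B Lam mu x = S + ereal (B (\<theta> mu) - \<theta> mu * x)" if "mu \<in> M" for mu
    using psi_star_eq_SUP[OF that] by (simp add: S_def)
  obtain t where "t \<in> Lam"
    using False M_eq by blast
  then have "ereal (t * x - B t) \<le> S"
    unfolding S_def by (rule SUP_upper)
  then show ?thesis
  proof (cases S)
    case (real s)
    have "continuous_on M (\<lambda>mu. s + (B (\<theta> mu) - \<theta> mu * x))"
      using continuous_on_compose2[OF continuous_on_B continuous_on_theta] theta_mem
      by (auto intro!: continuous_intros continuous_on_theta)
    then have "open {mu \<in> M. s + (B (\<theta> mu) - \<theta> mu * x) < c}"
      by (rule open_sublevel_set[OF open_M])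
    moreover have "{mu \<in> M. psi_star B Lam mu x < ereal c} = {mu \<in> M. s + (B (\<theta> mu) - \<theta> mu * x) < c}"
      using S real by auto
    ultimately show ?thesis
      by simp
  next
    case PInf
    then have "{mu \<in> M. psi_star B Lam mu x < ereal c} = {}"
      using S by auto
    then show ?thesis
      by (metis open_empty)
  qed simp
qed simp

definition upper_level_map :: "(real \<Rightarrow> real) \<Rightarrow> real \<Rightarrow> bool" where
  "upper_level_map beta D \<longleftrightarrow>
     (\<forall>mu\<in>M. beta mu \<in> M \<and> mu < beta mu \<and> breg B Lam mu (beta mu) mu = ereal D)"

lemma upper_level_mapD:
  assumes "upper_level_map beta D" "mu \<in> M"
  shows "beta mu \<in> M" "mu < beta mu" "\<theta> (beta mu) \<in> Lam" "\<theta> mu < \<theta> (beta mu)"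
    and "bregman (\<theta> mu) (\<theta> (beta mu)) = D"
  using assms theta_mem theta_less_iff breg_eq_bregman by (auto simp: upper_level_map_def)

lemma upper_level_map_of_indicator:
  assumes "0 < d"
    and "\<forall>mu\<in>M. m mu \<in> M \<and> breg B Lam mu (m mu) mu * ereal (if m mu \<ge> mu then 1 else 0) = ereal d"
  shows "upper_level_map m d"
  unfolding upper_level_map_def
proof
  fix mu assume "mu \<in> M"
  with assms have "m mu \<in> M" "mu \<le> m mu" "breg B Lam mu (m mu) mu = ereal d"
    by (auto split: if_splits simp: zero_ereal_def[symmetric] one_ereal_def[symmetric])
  moreover have "m mu \<noteq> mu"
    using \<open>mu \<in> M\<close> breg_eq_bregman \<open>0 < d\<close> calculation by force
  ultimately show "m mu \<in> M \<and> mu < m mu \<and> breg B Lam mu (m mu) mu = ereal d"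
    by simp
qed

lemma llr_upper_level_map_antimono:
  assumes "upper_level_map beta D" "u \<in> M" "v \<in> M" "u \<le> v" "v \<le> x"
  shows "llr x (\<theta> v) (\<theta> (beta v)) \<le> llr x (\<theta> u) (\<theta> (beta u))"
  using upper_level_mapD[OF assms(1) assms(2)] upper_level_mapD[OF assms(1) assms(3)] assms(2-5)
    theta_mem theta_le_iff deriv_theta
  by (intro llr_level_set_antimono[where d = D]) (auto simp: less_imp_le)

lemma Ln_upper_level_map_antimono:
  assumes "upper_level_map beta D"
  shows "antimono_on ({..x} \<inter> M) (\<lambda>mu. Ln B Lam n x (beta mu) mu)"
proof (rule monotone_onI)
  fix u v assume "u \<in> {..x} \<inter> M" "v \<in> {..x} \<inter> M" "u \<le> v"
  then show "Ln B Lam n x (beta v) v \<le> Ln B Lam n x (beta u) u"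
    using llr_upper_level_map_antimono[OF assms, of u v x] upper_level_mapD[OF assms]
    by (simp add: Ln_eq_exp_llr mult_left_mono)
qed

lemma continuous_on_upper_level_map:
  assumes "upper_level_map beta D"
  shows "continuous_on M (\<lambda>mu. \<theta> (beta mu))"
proof -
  have Lipschitz: "\<bar>\<theta> (beta v) - \<theta> (beta u)\<bar> \<le> \<bar>\<theta> v - \<theta> u\<bar>" if "u \<in> M" "v \<in> M" for u v
    using bregman_level_set_dist upper_level_mapD[OF assms that(1)] upper_level_mapD[OF assms that(2)]
      theta_mem that by (simp add: less_imp_le)
  show ?thesis
    unfolding continuous_on_iff
  proof (intro ballI allI impI)
    fix u and e :: real assume "u \<in> M" "0 < e"
    then obtain r where "0 < r" "\<forall>v\<in>M. dist v u < r \<longrightarrow> dist (\<theta> v) (\<theta> u) < e"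
      using continuous_on_theta unfolding continuous_on_iff by blast
    then show "\<exists>r>0. \<forall>v\<in>M. dist v u < r \<longrightarrow> dist (\<theta> (beta v)) (\<theta> (beta u)) < e"
      using Lipschitz \<open>u \<in> M\<close> by (force simp: dist_real_def)
  qed
qed

lemma open_llr_sublevel:
  assumes "upper_level_map beta D"
  shows "open {mu \<in> M. llr x (\<theta> mu) (\<theta> (beta mu)) < c}"
proof (rule open_sublevel_set[OF open_M])
  have "(\<lambda>mu. \<theta> (beta mu)) ` M \<subseteq> Lam" "\<theta> ` M \<subseteq> Lam"
    using upper_level_mapD[OF assms] theta_mem by auto
  then have "continuous_on M (\<lambda>mu. B (\<theta> (beta mu)))" "continuous_on M (\<lambda>mu. B (\<theta> mu))"
    using continuous_on_compose2[OF continuous_on_B continuous_on_upper_level_map[OF assms]]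
      continuous_on_compose2[OF continuous_on_B continuous_on_theta] by auto
  then show "continuous_on M (\<lambda>mu. llr x (\<theta> mu) (\<theta> (beta mu)))"
    unfolding llr_def
    by (intro continuous_intros continuous_on_theta continuous_on_upper_level_map[OF assms])
qed

lemma CI_tail_open_interval:
  assumes "upper_level_map beta D" "0 < c"
  shows "\<exists>a b :: ereal. {mu \<in> M. slopeD B Lam mu (beta mu) * (x - beta mu) < c - D} =
           {mu. a < ereal mu \<and> ereal mu < b}"
proof -
  have "{mu \<in> M. slopeD B Lam mu (beta mu) * (x - beta mu) < c - D} =
        {mu \<in> M. llr x (\<theta> mu) (\<theta> (beta mu)) < c}" (is "_ = ?U")
    using upper_level_mapD[OF assms(1)] slopeD_mul_eq by auto
  moreover have "\<exists>a b :: ereal. ?U = {mu. a < ereal mu \<and> ereal mu < b}"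
  proof (rule upward_closed_open_subset_interval[OF open_llr_sublevel[OF assms(1)] _ is_interval_M])
    fix u v assume u: "u \<in> ?U" and "v \<in> M" "u \<le> v"
    show "v \<in> ?U"
    proof (cases "v \<le> x")
      case True
      then show ?thesis
        using llr_upper_level_map_antimono[OF assms(1), of u v x] u \<open>v \<in> M\<close> \<open>u \<le> v\<close> by auto
    next
      case False
      then have "llr x (\<theta> v) (\<theta> (beta v)) \<le> 0"
        using llr_nonpos upper_level_mapD[OF assms(1) \<open>v \<in> M\<close>] theta_mem deriv_theta \<open>v \<in> M\<close> by simp
      then show ?thesis
        using \<open>v \<in> M\<close> \<open>0 < c\<close> by simp
    qed
  qed auto
  ultimately show ?thesis
    by simp
qed

lemma CI_middle_open_interval:
  "\<exists>a b :: ereal. {mu \<in> M. breg B Lam mu x mu < ereal c \<or> x < mu} = {mu. a < ereal mu \<and> ereal mu < b}"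
proof -
  have "{mu \<in> M. breg B Lam mu x mu < ereal c \<or> x < mu} =
        {mu \<in> M. psi_star B Lam mu x < ereal c} \<union> {mu \<in> M. x - mu < 0}" (is "_ = ?U")
    using breg_eq_psi_star by auto
  moreover have "\<exists>a b :: ereal. ?U = {mu. a < ereal mu \<and> ereal mu < b}"
  proof (rule upward_closed_open_subset_interval[OF _ _ is_interval_M])
    show "open ?U"
      by (intro open_Un open_psi_star_sublevel open_sublevel_set[OF open_M] continuous_intros)
    fix u v assume "u \<in> ?U" "v \<in> M" "u \<le> v"
    then show "v \<in> ?U"
      using psi_star_antimono[of u v x] by (cases "v \<le> x") auto
  qed auto
  ultimately show ?thesis
    by simp
qed

end

theorem proposition1:
  fixes M Lam :: "real set" and B :: "real \<Rightarrow> real"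
    and d :: real and m :: "real \<Rightarrow> real"
    and g :: real and nmin nmax :: nat and mu1 mu2 :: "real \<Rightarrow> real"
  assumes M_open: "open M" and M_convex: "convex M" and M_ne: "M \<noteq> {}"
    and Lam_open: "open Lam"
    and B_diff: "\<forall>t\<in>Lam. B differentiable (at t)"
    and B_strict: "strictly_convex_on Lam B"
    and Lam_eq: "Lam = {t\<in>Lam. deriv B t \<in> M}" and M_eq: "M = deriv B ` Lam"
    and B'_convex: "convex_on Lam (deriv B)"
    and star_fin: "\<forall>mu\<in>M. \<forall>z\<in>M. \<bar>psi_star B Lam mu z\<bar> \<noteq> \<infinity>"
    and star_diff: "\<forall>mu\<in>M. \<forall>z\<in>M.
                      (\<lambda>w. real_of_ereal (psi_star B Lam mu w)) differentiable (at z)"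
    and d_pos: "d > 0"
    and m_sol: "\<forall>mu0\<in>M. m mu0 \<in> M \<and>
                  breg B Lam mu0 (m mu0) mu0 * ereal (if m mu0 \<ge> mu0 then 1 else 0) = ereal d"
    and g_pos: "g > 0" and nmin_pos: "1 \<le> nmin" and nmin_nmax: "nmin < nmax"
    and mu12: "\<forall>mu0\<in>M. mu1 mu0 \<in> M \<and> mu2 mu0 \<in> M \<and> mu0 < mu1 mu0 \<and> mu1 mu0 < mu2 mu0 \<and>
                 breg B Lam mu0 (mu1 mu0) mu0 = ereal (g / real nmax) \<and>
                 breg B Lam mu0 (mu2 mu0) mu0 = ereal (g / real nmin)"
  shows "(\<forall>n::nat. \<forall>xbar\<in>closure M.
            antimono_on ({..xbar} \<inter> M) (\<lambda>mu0. Ln B Lam n xbar (m mu0) mu0))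
       \<and> (\<forall>n::nat. \<forall>xbar\<in>closure M. n \<ge> 1 \<longrightarrow>
            (\<exists>a b :: ereal. CI B Lam M g nmin nmax mu1 mu2 n xbar = {mu. a < ereal mu \<and> ereal mu < b}))"
proof -
  have "\<And>t. t \<in> Lam \<Longrightarrow> (B has_real_derivative deriv B t) (at t)"
    using B_diff by (simp add: DERIV_deriv_iff_real_differentiable)
  then interpret ef_like_family Lam B M
    using Lam_open B_strict B'_convex M_eq M_open star_diff by unfold_locales auto
  have m_level: "upper_level_map m d"
    using d_pos m_sol by (rule upper_level_map_of_indicator)
  have mu1_level: "upper_level_map mu1 (g / real nmax)"
    and mu2_level: "upper_level_map mu2 (g / real nmin)"
    using mu12 by (auto simp: upper_level_map_def)
  show ?thesis
  proof (intro conjI allI ballI impI)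
    fix n :: nat and xbar
    show "antimono_on ({..xbar} \<inter> M) (\<lambda>mu0. Ln B Lam n xbar (m mu0) mu0)"
      using m_level by (rule Ln_upper_level_map_antimono)
    assume "1 \<le> n"
    then have "0 < g / real n"
      using g_pos by simp
    then show "\<exists>a b. CI B Lam M g nmin nmax mu1 mu2 n xbar = {mu. a < ereal mu \<and> ereal mu < b}"
      using CI_tail_open_interval[OF mu1_level] CI_tail_open_interval[OF mu2_level]
        CI_middle_open_interval
      by (simp add: CI_def)
  qed
qed

end
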